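(* Let $\alpha\in(0,1)$ and let $G_\alpha$ be the two-player zero-sum game in which the $x$-player (maximizer) and the $y$-player (minimizer) choose $x\in[0,1-\alpha]$ and $y\in[0,1-\alpha]$ respectively (mixed strategies being probability distributions on $[0,1-\alpha]$), with payoff $g(x,y)=(1-x)-(1-y)\mathbf{1}_{y\ge x}$. Let $v$ denote its value. (i) If $\alpha\ge\frac1e$, then $v=-\alpha\ln\alpha$; an optimal strategy of the $x$-player is the distribution on $[0,1-\alpha]$ with an atom of weight $\alpha$ at $x=0$ and density $f_X(x)=\frac{\alpha}{(1-x)^2}$ on $[0,1-\alpha]$; and an optimal strategy of the $y$-player is the distribution with an atom of weight $1+\ln\alpha$ at $y=1-\alpha$ and density $f_Y(y)=\frac{1}{1-y}$ on $[0,1-\alpha]$. (ii) If $\alpha<\frac1e$, then $v=\frac1e$; an optimal strategy of the $x$-player is the distribution with an atom of weight $\frac1e$ at $x=0$ and density $f_X(x)=\frac{1}{e(1-x)^2}$ on $[0,1-\frac1e]$; and an optimal strategy of the $y$-player is the distribution with density $f_Y(y)=\frac{1}{1-y}$ on $[0,1-\frac1e]$. *)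

theory Defs
  imports "HOL-Probability.Probability"
begin

definition payoff :: "real \<Rightarrow> real \<Rightarrow> real" where
  "payoff x y = (1 - x) - (if y \<ge> x then 1 - y else 0)"

definition strategies :: "real \<Rightarrow> real measure set" where
  "strategies \<alpha> = {M. sets M = sets borel \<and> prob_space M \<and> emeasure M {0..1-\<alpha>} = 1}"

definition exp_payoff :: "real measure \<Rightarrow> real measure \<Rightarrow> real" where
  "exp_payoff P Q = (\<integral>x. (\<integral>y. payoff x y \<partial>Q) \<partial>P)"

definition lower_value :: "real \<Rightarrow> real" where
  "lower_value \<alpha> = (SUP P\<in>strategies \<alpha>. INF Q\<in>strategies \<alpha>. exp_payoff P Q)"

definition upper_value :: "real \<Rightarrow> real" where
  "upper_value \<alpha> = (INF Q\<in>strategies \<alpha>. SUP P\<in>strategies \<alpha>. exp_payoff P Q)"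

definition is_value :: "real \<Rightarrow> real \<Rightarrow> bool" where
  "is_value \<alpha> v \<longleftrightarrow> lower_value \<alpha> = v \<and> upper_value \<alpha> = v"

definition optimal_x :: "real \<Rightarrow> real \<Rightarrow> real measure \<Rightarrow> bool" where
  "optimal_x \<alpha> v P \<longleftrightarrow> P \<in> strategies \<alpha> \<and> (\<forall>Q\<in>strategies \<alpha>. exp_payoff P Q \<ge> v)"

definition optimal_y :: "real \<Rightarrow> real \<Rightarrow> real measure \<Rightarrow> bool" where
  "optimal_y \<alpha> v Q \<longleftrightarrow> Q \<in> strategies \<alpha> \<and> (\<forall>P\<in>strategies \<alpha>. exp_payoff P Q \<le> v)"

definition atom_plus_density :: "real \<Rightarrow> real \<Rightarrow> (real \<Rightarrow> real) \<Rightarrow> real \<Rightarrow> real measure" where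
  "atom_plus_density a c f L = measure_of UNIV (sets borel)
     (\<lambda>A. ennreal a * indicator A c + (\<integral>\<^sup>+ x\<in>A \<inter> {0..L}. ennreal (f x) \<partial>lborel))"

end

theory Submission
  imports Defs
begin

text \<open>On [0,1]^2 the payoff equals y - x for x \<le> y and 1 - x otherwise, so it lies in [0,1].
  Expected payoffs are thus integrals of bounded nonnegative functions, and Tonelli's theorem
  reduces the optimality of a mixed strategy to its guarantee against every pure strategy of
  the opponent. Write the payoff as (1 - x) - refund x y, where refund x y = (1 - y) if x \<le> y.

  The x-strategy with an atom \<beta> at 0 and density \<beta>/(1-x)^2 on [0,1-\<beta>] has mean
  E[1 - X] = \<beta> - \<beta> ln \<beta>, while the expected refund (1 - y) P(X \<le> y) is \<beta> for
  y \<le> 1-\<beta> and smaller beyond, so this strategy secures -\<beta> ln \<beta>. Against the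
  y-strategy with density 1/(1-y) on [0,L] and an atom b at c, the expected refund
  b (1 - c) [x \<le> c] + max 0 (L - x) makes the x-player's payoff constant on [0,L].
  For \<alpha> \<ge> 1/e take \<beta> = \<alpha>, c = L = 1 - \<alpha> and b = 1 + ln \<alpha>; for \<alpha> < 1/e the
  maximiser \<beta> = 1/e of -\<beta> ln \<beta> still fits into [0,1-\<alpha>], with L = 1 - 1/e and no atom.\<close>

lemma saddle_point_value:
  fixes F :: "'a \<Rightarrow> 'b \<Rightarrow> real"
  assumes "p \<in> S" "q \<in> T"
    and p: "\<And>y. y \<in> T \<Longrightarrow> v \<le> F p y" and q: "\<And>x. x \<in> S \<Longrightarrow> F x q \<le> v"
    and bounded: "\<And>x y. x \<in> S \<Longrightarrow> y \<in> T \<Longrightarrow> \<bar>F x y\<bar> \<le> B"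
  shows "(SUP x\<in>S. INF y\<in>T. F x y) = v" and "(INF y\<in>T. SUP x\<in>S. F x y) = v"
proof -
  have bdd_below: "bdd_below (F x ` T)" if "x \<in> S" for x
    using bounded that by (intro bdd_belowI[where m="-B"]) (force simp: abs_le_iff)
  have bdd_above: "bdd_above ((\<lambda>x. F x y) ` S)" if "y \<in> T" for y
    using bounded that by (intro bdd_aboveI[where M=B]) (force simp: abs_le_iff)
  have INF_le: "(INF y\<in>T. F x y) \<le> v" if "x \<in> S" for x
    using cINF_lower[OF bdd_below[OF that] \<open>q \<in> T\<close>] q[OF that] by linarith
  have le_SUP: "v \<le> (SUP x\<in>S. F x y)" if "y \<in> T" for y
    using cSUP_upper[OF \<open>p \<in> S\<close> bdd_above[OF that]] p[OF that] by linarith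
  have le_INF: "v \<le> (INF y\<in>T. F p y)"
    using \<open>q \<in> T\<close> p by (intro cINF_greatest) auto
  have SUP_le: "(SUP x\<in>S. F x q) \<le> v"
    using \<open>p \<in> S\<close> q by (intro cSUP_least) auto
  show "(SUP x\<in>S. INF y\<in>T. F x y) = v"
  proof (rule antisym)
    show "(SUP x\<in>S. INF y\<in>T. F x y) \<le> v"
      using \<open>p \<in> S\<close> INF_le by (intro cSUP_least) auto
    show "v \<le> (SUP x\<in>S. INF y\<in>T. F x y)"
      using le_INF cSUP_upper[OF \<open>p \<in> S\<close>, of "\<lambda>x. INF y\<in>T. F x y"] INF_le
      by (force intro: order_trans bdd_aboveI[where M=v])
  qed
  show "(INF y\<in>T. SUP x\<in>S. F x y) = v"
  proof (rule antisym)
    show "v \<le> (INF y\<in>T. SUP x\<in>S. F x y)"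
      using \<open>q \<in> T\<close> le_SUP by (intro cINF_greatest) auto
    show "(INF y\<in>T. SUP x\<in>S. F x y) \<le> v"
      using SUP_le cINF_lower[OF _ \<open>q \<in> T\<close>, of "\<lambda>y. SUP x\<in>S. F x y"] le_SUP
      by (force intro: order_trans bdd_belowI[where m=v])
  qed
qed

lemma sets_atom_plus_density[simp, measurable_cong]: "sets (atom_plus_density a c f L) = sets borel"
  by (simp add: atom_plus_density_def sets_measure_of_conv sets.sigma_sets_eq[where M=borel, simplified])

lemma emeasure_atom_plus_density:
  assumes "0 \<le> a" and [measurable]: "f \<in> borel_measurable borel" and "A \<in> sets borel"
  shows "emeasure (atom_plus_density a c f L) A
    = ennreal a * indicator A c + (\<integral>\<^sup>+x\<in>A \<inter> {0..L}. ennreal (f x) \<partial>lborel)"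
proof -
  define \<mu> where "\<mu> A = ennreal a * indicator A c + (\<integral>\<^sup>+x\<in>A \<inter> {0..L}. ennreal (f x) \<partial>lborel)" for A
  define D where "D = density lborel (\<lambda>x. ennreal (f x) * indicator {0..L} x)"
  have \<mu>_eq: "\<mu> B = ennreal a * emeasure (return borel c) B + emeasure D B" if "B \<in> sets borel" for B
    using that by (simp add: \<mu>_def D_def emeasure_density indicator_inter_arith ac_simps)
  have "countably_additive (sets borel) \<mu>"
  proof (rule countably_additiveI)
    fix B :: "nat \<Rightarrow> real set"
    assume B: "range B \<subseteq> sets borel" "disjoint_family B"
    then have "(\<Sum>i. \<mu> (B i)) = ennreal a * (\<Sum>i. emeasure (return borel c) (B i)) + (\<Sum>i. emeasure D (B i))"
      by (auto simp: \<mu>_eq suminf_add[symmetric] simp del: emeasure_return)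
    also have "\<dots> = \<mu> (\<Union>i. B i)"
      using B by (simp add: \<mu>_eq suminf_emeasure D_def del: emeasure_return)
    finally show "(\<Sum>i. \<mu> (B i)) = \<mu> (\<Union>i. B i)" .
  qed
  moreover have "positive (sets borel) \<mu>"
    by (simp add: positive_def \<mu>_def)
  moreover have "sigma_algebra UNIV (sets borel)"
    by (metis sets.sigma_algebra_axioms space_borel)
  ultimately show ?thesis
    using emeasure_measure_of_sigma assms(3) unfolding atom_plus_density_def \<mu>_def[symmetric] by blast
qed

lemma nn_integral_atom_plus_density:
  assumes "0 \<le> a" and [measurable]: "f \<in> borel_measurable borel" "g \<in> borel_measurable borel"
  shows "(\<integral>\<^sup>+x. g x \<partial>atom_plus_density a c f L)
    = ennreal a * g c + (\<integral>\<^sup>+x\<in>{0..L}. ennreal (f x) * g x \<partial>lborel)"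
proof -
  define D where "D = density lborel (\<lambda>x. ennreal (f x) * indicator {0..L} x)"
  have [measurable_cong]: "sets D = sets borel"
    by (simp add: D_def)
  have "(\<integral>\<^sup>+x. g x \<partial>atom_plus_density a c f L) = ennreal a * (\<integral>\<^sup>+x. g x \<partial>return borel c) + (\<integral>\<^sup>+x. g x \<partial>D)"
    using assms(3)
  proof (induction rule: borel_measurable_induct)
    case (cong u v)
    then show ?case
      by simp
  next
    case (set A)
    then show ?case
      by (simp add: emeasure_atom_plus_density[OF assms(1,2)] D_def emeasure_density
          indicator_inter_arith ac_simps)
  next
    case (mult u r)
    then have [measurable]: "u \<in> borel_measurable borel"
      by simp
    from mult show ?case
      by (simp add: nn_integral_cmult distrib_left ac_simps del: nn_integral_return)
  next
    case (add u v)
    then have [measurable]: "u \<in> borel_measurable borel" "v \<in> borel_measurable borel"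
      by simp_all
    from add show ?case
      by (simp add: nn_integral_add distrib_left ac_simps del: nn_integral_return)
  next
    case (seq U)
    then have [measurable]: "U i \<in> borel_measurable borel" for i
      by simp
    have inc: "incseq (\<lambda>i. \<integral>\<^sup>+x. U i x \<partial>M)" for M
      using seq.hyps unfolding incseq_def by (auto intro!: nn_integral_mono simp: le_fun_def)
    have SUP_eq: "(\<integral>\<^sup>+x. (SUP i. U i) x \<partial>M) = (SUP i. \<integral>\<^sup>+x. U i x \<partial>M)" if "sets M = sets borel" for M
      unfolding SUP_apply using seq.hyps
      by (intro nn_integral_monotone_convergence_SUP) (auto simp: measurable_cong_sets[OF that refl])
    have "(\<integral>\<^sup>+x. (SUP i. U i) x \<partial>atom_plus_density a c f L)
        = (SUP i. ennreal a * (\<integral>\<^sup>+x. U i x \<partial>return borel c) + (\<integral>\<^sup>+x. U i x \<partial>D))"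
      by (simp only: SUP_eq sets_atom_plus_density seq.IH)
    also have "\<dots> = ennreal a * (SUP i. \<integral>\<^sup>+x. U i x \<partial>return borel c) + (SUP i. \<integral>\<^sup>+x. U i x \<partial>D)"
      using inc by (subst ennreal_SUP_add) (auto simp: incseq_def SUP_mult_left_ennreal intro: mult_left_mono)
    also have "\<dots> = ennreal a * (\<integral>\<^sup>+x. (SUP i. U i) x \<partial>return borel c) + (\<integral>\<^sup>+x. (SUP i. U i) x \<partial>D)"
      by (simp only: SUP_eq sets_return \<open>sets D = sets borel\<close>)
    finally show ?case .
  qed
  then show ?thesis
    using assms(3) by (simp add: D_def nn_integral_density nn_integral_return ac_simps)
qed

lemma nn_integral_inverse_square:
  assumes "0 \<le> \<beta>" "0 \<le> t" "t < 1"
  shows "(\<integral>\<^sup>+x\<in>{0..t}. ennreal (\<beta> / (1 - x)\<^sup>2) \<partial>lborel) = ennreal (\<beta> / (1 - t) - \<beta>)"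
proof -
  have "(\<integral>\<^sup>+x\<in>{0..t}. ennreal (\<beta> / (1 - x)\<^sup>2) \<partial>lborel) = ennreal (\<beta> / (1 - t) - \<beta> / (1 - 0))"
  proof (rule nn_integral_FTC_Icc)
    fix x assume "x \<in> {0..t}"
    then have "x < 1" using assms by auto
    then show "((\<lambda>x. \<beta> / (1 - x)) has_real_derivative \<beta> / (1 - x)\<^sup>2) (at x)"
      by (auto intro!: derivative_eq_intros simp: power2_eq_square)
  qed (use assms in auto)
  then show ?thesis by simp
qed

lemma nn_integral_inverse:
  assumes "0 \<le> \<beta>" "0 \<le> t" "t < 1"
  shows "(\<integral>\<^sup>+x\<in>{0..t}. ennreal (\<beta> / (1 - x)) \<partial>lborel) = ennreal (- \<beta> * ln (1 - t))"
proof -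
  have "(\<integral>\<^sup>+x\<in>{0..t}. ennreal (\<beta> / (1 - x)) \<partial>lborel) = ennreal (- \<beta> * ln (1 - t) - - \<beta> * ln (1 - 0))"
  proof (rule nn_integral_FTC_Icc)
    fix x assume "x \<in> {0..t}"
    then have "x < 1" using assms by auto
    then show "((\<lambda>x. - \<beta> * ln (1 - x)) has_real_derivative \<beta> / (1 - x)) (at x)"
      by (auto intro!: derivative_eq_intros simp: field_simps)
    show "0 \<le> \<beta> / (1 - x)" using assms \<open>x < 1\<close> by simp
  qed (use assms in auto)
  then show ?thesis by simp
qed

definition refund :: "real \<Rightarrow> real \<Rightarrow> real" where
  "refund x y = (if x \<le> y then 1 - y else 0)"

lemma payoff_plus_refund: "payoff x y + refund x y = 1 - x"
  by (simp add: payoff_def refund_def)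

lemma payoff_nonneg: "x \<le> 1 \<Longrightarrow> 0 \<le> payoff x y"
  by (simp add: payoff_def)

lemma payoff_le_1: "0 \<le> x \<Longrightarrow> y \<le> 1 \<Longrightarrow> payoff x y \<le> 1"
  by (simp add: payoff_def)

lemma refund_nonneg: "y \<le> 1 \<Longrightarrow> 0 \<le> refund x y"
  by (simp add: refund_def)

lemma measurable_payoff[measurable]:
  assumes [measurable]: "f \<in> borel_measurable M" "g \<in> borel_measurable M"
  shows "(\<lambda>z. payoff (f z) (g z)) \<in> borel_measurable M"
  unfolding payoff_def by measurable

lemma measurable_refund[measurable]:
  assumes [measurable]: "f \<in> borel_measurable M" "g \<in> borel_measurable M"
  shows "(\<lambda>z. refund (f z) (g z)) \<in> borel_measurable M"
  unfolding refund_def by measurable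

lemma strategiesD:
  assumes "M \<in> strategies \<alpha>"
  shows "sets M = sets borel" "space M = UNIV" "prob_space M" "AE x in M. x \<in> {0..1 - \<alpha>}"
proof -
  show "sets M = sets borel" and "prob_space M"
    using assms by (auto simp: strategies_def)
  then show "space M = UNIV"
    using sets_eq_imp_space_eq by force
  interpret prob_space M
    by fact
  show "AE x in M. x \<in> {0..1 - \<alpha>}"
    using assms by (intro AE_prob_1) (simp add: strategies_def measure_def)
qed

lemma atom_plus_density_in_strategies:
  assumes "0 \<le> a" "f \<in> borel_measurable borel"
    and total_mass: "ennreal a + (\<integral>\<^sup>+x\<in>{0..L}. ennreal (f x) \<partial>lborel) = 1"
    and "0 \<le> c" "c \<le> 1 - \<alpha>" "L \<le> 1 - \<alpha>"
  shows "atom_plus_density a c f L \<in> strategies \<alpha>"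
proof -
  have mass_1: "emeasure (atom_plus_density a c f L) A = 1" if "c \<in> A" "{0..L} \<subseteq> A" "A \<in> sets borel" for A
  proof -
    have "A \<inter> {0..L} = {0..L}" using that by auto
    then show ?thesis
      using that assms(1,2) total_mass by (simp add: emeasure_atom_plus_density)
  qed
  have "space (atom_plus_density a c f L) = UNIV"
    using sets_eq_imp_space_eq[OF sets_atom_plus_density] by simp
  then have "prob_space (atom_plus_density a c f L)"
    by (intro prob_spaceI) (simp add: mass_1)
  moreover have "emeasure (atom_plus_density a c f L) {0..1-\<alpha>} = 1"
    using assms by (intro mass_1) auto
  ultimately show ?thesis
    by (simp add: strategies_def)
qed

lemma nn_integral_payoff_le_1:
  assumes "Q \<in> strategies \<alpha>" "0 \<le> \<alpha>" "0 \<le> x"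
  shows "(\<integral>\<^sup>+y. ennreal (payoff x y) \<partial>Q) \<le> 1"
proof -
  interpret prob_space Q
    using strategiesD(3)[OF assms(1)] .
  have "AE y in Q. ennreal (payoff x y) \<le> 1"
    using strategiesD(4)[OF assms(1)] by eventually_elim (use assms(2,3) in \<open>simp add: payoff_le_1\<close>)
  then have "(\<integral>\<^sup>+y. ennreal (payoff x y) \<partial>Q) \<le> (\<integral>\<^sup>+y. 1 \<partial>Q)"
    by (rule nn_integral_mono_AE)
  then show ?thesis
    by (simp add: emeasure_space_1)
qed

lemma nn_integral_nn_integral_payoff_le_1:
  assumes P: "P \<in> strategies \<alpha>" and Q: "Q \<in> strategies \<alpha>" and "0 \<le> \<alpha>"
  shows "(\<integral>\<^sup>+x. \<integral>\<^sup>+y. ennreal (payoff x y) \<partial>Q \<partial>P) \<le> 1"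
proof -
  interpret prob_space P
    using strategiesD(3)[OF P] .
  have "(\<integral>\<^sup>+x. \<integral>\<^sup>+y. ennreal (payoff x y) \<partial>Q \<partial>P) \<le> (\<integral>\<^sup>+x. 1 \<partial>P)"
    using strategiesD(4)[OF P]
    by (intro nn_integral_mono_AE) (auto elim!: eventually_mono intro: nn_integral_payoff_le_1[OF Q assms(3)])
  then show ?thesis
    by (simp add: emeasure_space_1)
qed

lemma exp_payoff_eq_nn_integral:
  assumes P: "P \<in> strategies \<alpha>" and Q: "Q \<in> strategies \<alpha>" and "0 \<le> \<alpha>"
  shows "exp_payoff P Q = enn2real (\<integral>\<^sup>+x. \<integral>\<^sup>+y. ennreal (payoff x y) \<partial>Q \<partial>P)"
proof -
  note [measurable_cong] = strategiesD(1)[OF P] strategiesD(1)[OF Q]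
  interpret Q: prob_space Q
    using strategiesD(3)[OF Q] .
  have "AE x in P. (\<integral>y. payoff x y \<partial>Q) = enn2real (\<integral>\<^sup>+y. ennreal (payoff x y) \<partial>Q)"
    using strategiesD(4)[OF P]
    by eventually_elim (use assms(3) in \<open>auto intro!: integral_eq_nn_integral payoff_nonneg\<close>)
  then have "exp_payoff P Q = (\<integral>x. enn2real (\<integral>\<^sup>+y. ennreal (payoff x y) \<partial>Q) \<partial>P)"
    unfolding exp_payoff_def by (rule integral_cong_AE[rotated 2]) measurable
  also have "\<dots> = enn2real (\<integral>\<^sup>+x. ennreal (enn2real (\<integral>\<^sup>+y. ennreal (payoff x y) \<partial>Q)) \<partial>P)"
    by (rule integral_eq_nn_integral) auto
  also have "(\<integral>\<^sup>+x. ennreal (enn2real (\<integral>\<^sup>+y. ennreal (payoff x y) \<partial>Q)) \<partial>P)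
      = (\<integral>\<^sup>+x. \<integral>\<^sup>+y. ennreal (payoff x y) \<partial>Q \<partial>P)"
  proof (rule nn_integral_cong_AE)
    show "AE x in P. ennreal (enn2real (\<integral>\<^sup>+y. ennreal (payoff x y) \<partial>Q)) = (\<integral>\<^sup>+y. ennreal (payoff x y) \<partial>Q)"
      using strategiesD(4)[OF P]
    proof eventually_elim
      case (elim x)
      then have "(\<integral>\<^sup>+y. ennreal (payoff x y) \<partial>Q) \<le> 1"
        by (intro nn_integral_payoff_le_1[OF Q assms(3)]) simp
      then have "(\<integral>\<^sup>+y. ennreal (payoff x y) \<partial>Q) < \<top>"
        using ennreal_one_less_top by (rule order.strict_trans1)
      then show ?case by simp
    qed
  qed
  finally show ?thesis .
qed

lemma exp_payoff_le_if_pure: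
  assumes P: "P \<in> strategies \<alpha>" and Q: "Q \<in> strategies \<alpha>" and "0 \<le> \<alpha>" "0 \<le> v"
    and pure: "\<And>x. x \<in> {0..1-\<alpha>} \<Longrightarrow> (\<integral>\<^sup>+y. ennreal (payoff x y) \<partial>Q) \<le> ennreal v"
  shows "exp_payoff P Q \<le> v"
proof -
  interpret prob_space P
    using strategiesD(3)[OF P] .
  have "(\<integral>\<^sup>+x. \<integral>\<^sup>+y. ennreal (payoff x y) \<partial>Q \<partial>P) \<le> (\<integral>\<^sup>+x. ennreal v \<partial>P)"
    using strategiesD(4)[OF P] by (intro nn_integral_mono_AE, eventually_elim) (rule pure)
  then show ?thesis
    using assms by (simp add: exp_payoff_eq_nn_integral emeasure_space_1 enn2real_leI)
qed

lemma exp_payoff_ge_if_pure: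
  assumes P: "P \<in> strategies \<alpha>" and Q: "Q \<in> strategies \<alpha>" and "0 \<le> \<alpha>"
    and pure: "\<And>y. y \<in> {0..1-\<alpha>} \<Longrightarrow> ennreal v \<le> (\<integral>\<^sup>+x. ennreal (payoff x y) \<partial>P)"
  shows "v \<le> exp_payoff P Q"
proof -
  note [measurable_cong] = strategiesD(1)[OF P] strategiesD(1)[OF Q]
  interpret pair_prob_space P Q
    using strategiesD(3)[OF P] strategiesD(3)[OF Q]
    by (simp add: pair_prob_space_def pair_sigma_finite_def prob_space_imp_sigma_finite)
  have "ennreal v = (\<integral>\<^sup>+y. ennreal v \<partial>Q)"
    by (simp add: M2.emeasure_space_1)
  also have "\<dots> \<le> (\<integral>\<^sup>+y. \<integral>\<^sup>+x. ennreal (payoff x y) \<partial>P \<partial>Q)"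
    using strategiesD(4)[OF Q] by (intro nn_integral_mono_AE, eventually_elim) (rule pure)
  also have "\<dots> = (\<integral>\<^sup>+x. \<integral>\<^sup>+y. ennreal (payoff x y) \<partial>Q \<partial>P)"
    by (rule Fubini') measurable
  finally have "ennreal v \<le> (\<integral>\<^sup>+x. \<integral>\<^sup>+y. ennreal (payoff x y) \<partial>Q \<partial>P)" .
  moreover have "(\<integral>\<^sup>+x. \<integral>\<^sup>+y. ennreal (payoff x y) \<partial>Q \<partial>P) < \<top>"
    using nn_integral_nn_integral_payoff_le_1[OF P Q assms(3)] ennreal_one_less_top
    by (rule order.strict_trans1)
  ultimately have "enn2real (ennreal v) \<le> enn2real (\<integral>\<^sup>+x. \<integral>\<^sup>+y. ennreal (payoff x y) \<partial>Q \<partial>P)"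
    by (rule enn2real_mono)
  moreover have "v \<le> enn2real (ennreal v)"
    by (cases "0 \<le> v") (auto simp: ennreal_neg)
  ultimately show ?thesis
    unfolding exp_payoff_eq_nn_integral[OF P Q assms(3)] by linarith
qed

lemma is_value_if_optimal:
  assumes "0 \<le> \<alpha>" "optimal_x \<alpha> v P" "optimal_y \<alpha> v Q"
  shows "is_value \<alpha> v"
proof -
  have "\<bar>exp_payoff P' Q'\<bar> \<le> 1" if "P' \<in> strategies \<alpha>" "Q' \<in> strategies \<alpha>" for P' Q'
    using nn_integral_nn_integral_payoff_le_1[OF that \<open>0 \<le> \<alpha>\<close>]
    by (simp add: exp_payoff_eq_nn_integral[OF that \<open>0 \<le> \<alpha>\<close>] enn2real_leI)
  then show ?thesis
    using assms saddle_point_value[of P "strategies \<alpha>" Q "strategies \<alpha>" v exp_payoff 1]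
    by (simp add: is_value_def lower_value_def upper_value_def optimal_x_def optimal_y_def)
qed

lemma nn_integral_payoff_plus_refund:
  assumes [measurable]: "u \<in> borel_measurable M" "w \<in> borel_measurable M"
    and "AE z in M. u z \<le> 1 \<and> w z \<le> 1"
  shows "(\<integral>\<^sup>+z. ennreal (payoff (u z) (w z)) \<partial>M) + (\<integral>\<^sup>+z. ennreal (refund (u z) (w z)) \<partial>M)
    = (\<integral>\<^sup>+z. ennreal (1 - u z) \<partial>M)"
proof -
  have "(\<integral>\<^sup>+z. ennreal (payoff (u z) (w z)) \<partial>M) + (\<integral>\<^sup>+z. ennreal (refund (u z) (w z)) \<partial>M)
      = (\<integral>\<^sup>+z. ennreal (payoff (u z) (w z)) + ennreal (refund (u z) (w z)) \<partial>M)"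
    by (rule nn_integral_add[symmetric]) measurable
  also have "\<dots> = (\<integral>\<^sup>+z. ennreal (1 - u z) \<partial>M)"
    using assms(3) by (intro nn_integral_cong_AE, eventually_elim)
      (simp add: payoff_nonneg refund_nonneg payoff_plus_refund flip: ennreal_plus)
  finally show ?thesis .
qed

lemma nn_integral_refund_inverse_square_le:
  assumes \<beta>: "0 < \<beta>" "\<beta> < 1" and y: "0 \<le> y" "y \<le> 1"
  shows "(\<integral>\<^sup>+x. ennreal (refund x y) \<partial>atom_plus_density \<beta> 0 (\<lambda>x. \<beta> / (1 - x)\<^sup>2) (1 - \<beta>)) \<le> ennreal \<beta>"
proof -
  define m where "m = min y (1 - \<beta>)"
  have m: "0 \<le> m" "m < 1" "m \<le> y"
    using \<beta> y by (auto simp: m_def)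
  have increment_nonneg: "0 \<le> \<beta> / (1 - m) - \<beta>"
    using \<beta> m by (simp add: le_divide_eq)
  have "(\<integral>\<^sup>+x\<in>{0..1-\<beta>}. ennreal (\<beta> / (1 - x)\<^sup>2) * ennreal (refund x y) \<partial>lborel)
      = (\<integral>\<^sup>+x. ennreal (1 - y) * (ennreal (\<beta> / (1 - x)\<^sup>2) * indicator {0..m} x) \<partial>lborel)"
    by (intro nn_integral_cong) (auto simp: refund_def indicator_def m_def mult.commute)
  also have "\<dots> = ennreal ((1 - y) * (\<beta> / (1 - m) - \<beta>))"
    using \<beta> m y increment_nonneg
    by (subst nn_integral_cmult) (auto simp: nn_integral_inverse_square ennreal_mult)
  finally have density: "(\<integral>\<^sup>+x\<in>{0..1-\<beta>}. ennreal (\<beta> / (1 - x)\<^sup>2) * ennreal (refund x y) \<partial>lborel)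
      = ennreal ((1 - y) * (\<beta> / (1 - m) - \<beta>))" .
  have atom: "ennreal \<beta> * ennreal (refund 0 y) = ennreal (\<beta> * (1 - y))"
    using \<beta> y by (simp add: refund_def ennreal_mult)
  have "(\<integral>\<^sup>+x. ennreal (refund x y) \<partial>atom_plus_density \<beta> 0 (\<lambda>x. \<beta> / (1 - x)\<^sup>2) (1 - \<beta>))
      = ennreal (\<beta> * (1 - y)) + ennreal ((1 - y) * (\<beta> / (1 - m) - \<beta>))"
    using \<beta> by (simp add: nn_integral_atom_plus_density density atom)
  also have "\<dots> = ennreal (\<beta> * (1 - y) + (1 - y) * (\<beta> / (1 - m) - \<beta>))"
    using \<beta> y increment_nonneg by (intro ennreal_plus[symmetric]) auto
  also have "\<dots> \<le> ennreal \<beta>"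
  proof (rule ennreal_leI)
    have "\<beta> * (1 - y) + (1 - y) * (\<beta> / (1 - m) - \<beta>) = \<beta> * ((1 - y) / (1 - m))"
      using m by (simp add: field_simps)
    also have "\<dots> \<le> \<beta>"
      using \<beta> m y by (intro mult_left_le) (auto simp: divide_le_eq)
    finally show "\<beta> * (1 - y) + (1 - y) * (\<beta> / (1 - m) - \<beta>) \<le> \<beta>" .
  qed
  finally show ?thesis .
qed

lemma nn_integral_one_minus_inverse_square:
  assumes "0 < \<beta>" "\<beta> < 1"
  shows "(\<integral>\<^sup>+x. ennreal (1 - x) \<partial>atom_plus_density \<beta> 0 (\<lambda>x. \<beta> / (1 - x)\<^sup>2) (1 - \<beta>))
    = ennreal \<beta> + ennreal (- \<beta> * ln \<beta>)"
proof -
  have "(\<integral>\<^sup>+x\<in>{0..1-\<beta>}. ennreal (\<beta> / (1 - x)\<^sup>2) * ennreal (1 - x) \<partial>lborel)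
      = (\<integral>\<^sup>+x\<in>{0..1-\<beta>}. ennreal (\<beta> / (1 - x)) \<partial>lborel)"
  proof (intro nn_integral_cong)
    fix x :: real
    show "ennreal (\<beta> / (1 - x)\<^sup>2) * ennreal (1 - x) * indicator {0..1-\<beta>} x
        = ennreal (\<beta> / (1 - x)) * indicator {0..1-\<beta>} x"
      using assms by (cases "x \<in> {0..1-\<beta>}") (auto simp: power2_eq_square simp flip: ennreal_mult)
  qed
  then show ?thesis
    using assms by (simp add: nn_integral_atom_plus_density nn_integral_inverse)
qed

lemma optimal_x_inverse_square:
  assumes "0 < \<alpha>" "\<alpha> \<le> \<beta>" "\<beta> < 1"
  shows "optimal_x \<alpha> (- \<beta> * ln \<beta>) (atom_plus_density \<beta> 0 (\<lambda>x. \<beta> / (1 - x)\<^sup>2) (1 - \<beta>))"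
proof -
  let ?P = "atom_plus_density \<beta> 0 (\<lambda>x. \<beta> / (1 - x)\<^sup>2) (1 - \<beta>)"
  have P: "?P \<in> strategies \<alpha>"
    using assms by (intro atom_plus_density_in_strategies) (auto simp: nn_integral_inverse_square simp flip: ennreal_plus)
  have pure: "ennreal (- \<beta> * ln \<beta>) \<le> (\<integral>\<^sup>+x. ennreal (payoff x y) \<partial>?P)" if "y \<in> {0..1-\<alpha>}" for y
  proof -
    have "ennreal \<beta> + ennreal (- \<beta> * ln \<beta>) = (\<integral>\<^sup>+x. ennreal (1 - x) \<partial>?P)"
      using assms by (simp add: nn_integral_one_minus_inverse_square)
    also have "\<dots> = (\<integral>\<^sup>+x. ennreal (refund x y) \<partial>?P) + (\<integral>\<^sup>+x. ennreal (payoff x y) \<partial>?P)"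
    proof -
      have "AE x in ?P. x \<le> 1 \<and> y \<le> 1"
        using strategiesD(4)[OF P] by eventually_elim (use that assms(1) in auto)
      then show ?thesis
        using nn_integral_payoff_plus_refund[of "\<lambda>x. x" ?P "\<lambda>_. y"] by (simp add: add.commute)
    qed
    also have "\<dots> \<le> ennreal \<beta> + (\<integral>\<^sup>+x. ennreal (payoff x y) \<partial>?P)"
      using that assms by (intro add_right_mono nn_integral_refund_inverse_square_le) auto
    finally show ?thesis
      by (simp add: ennreal_add_left_cancel_le)
  qed
  show ?thesis
    unfolding optimal_x_def
  proof (intro conjI ballI P)
    fix Q assume "Q \<in> strategies \<alpha>"
    then show "- \<beta> * ln \<beta> \<le> exp_payoff ?P Q"
      by (rule exp_payoff_ge_if_pure[OF P]) (use assms(1) pure in auto)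
  qed
qed

lemma nn_integral_refund_inverse:
  assumes "0 \<le> b" "c \<le> 1" "L < 1" "0 \<le> x"
  shows "(\<integral>\<^sup>+y. ennreal (refund x y) \<partial>atom_plus_density b c (\<lambda>y. 1 / (1 - y)) L)
    = ennreal (b * refund x c + max 0 (L - x))"
proof -
  have "(\<integral>\<^sup>+y\<in>{0..L}. ennreal (1 / (1 - y)) * ennreal (refund x y) \<partial>lborel) = (\<integral>\<^sup>+y. indicator {x..L} y \<partial>lborel)"
  proof (intro nn_integral_cong)
    fix y :: real
    show "ennreal (1 / (1 - y)) * ennreal (refund x y) * indicator {0..L} y = indicator {x..L} y"
      using assms by (cases "y \<in> {x..L}") (auto simp: refund_def indicator_def simp flip: ennreal_mult)
  qed
  moreover have "emeasure lborel {x..L} = ennreal (max 0 (L - x))"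
    by (simp add: max_def)
  ultimately show ?thesis
    using assms by (simp add: nn_integral_atom_plus_density refund_nonneg ennreal_plus ennreal_mult)
qed

lemma optimal_y_inverse:
  assumes "0 < \<alpha>" "0 \<le> b" "0 \<le> c" "c \<le> 1 - \<alpha>" "0 \<le> L" "L \<le> 1 - \<alpha>" "b - ln (1 - L) = 1" "0 \<le> v"
    and guarantee: "\<And>x. x \<in> {0..1-\<alpha>} \<Longrightarrow> 1 - x - b * refund x c - max 0 (L - x) \<le> v"
  shows "optimal_y \<alpha> v (atom_plus_density b c (\<lambda>y. 1 / (1 - y)) L)"
proof -
  let ?Q = "atom_plus_density b c (\<lambda>y. 1 / (1 - y)) L"
  have Q: "?Q \<in> strategies \<alpha>"
    using assms nn_integral_inverse[of 1 L]
    by (intro atom_plus_density_in_strategies) (auto simp flip: ennreal_plus)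
  interpret prob_space ?Q
    using strategiesD(3)[OF Q] .
  have pure: "(\<integral>\<^sup>+y. ennreal (payoff x y) \<partial>?Q) \<le> ennreal v" if "x \<in> {0..1-\<alpha>}" for x
  proof -
    let ?r = "b * refund x c + max 0 (L - x)"
    have "ennreal ?r + (\<integral>\<^sup>+y. ennreal (payoff x y) \<partial>?Q) = (\<integral>\<^sup>+y. ennreal (1 - x) \<partial>?Q)"
    proof -
      have "AE y in ?Q. x \<le> 1 \<and> y \<le> 1"
        using strategiesD(4)[OF Q] by eventually_elim (use that assms(1) in auto)
      then show ?thesis
        using nn_integral_payoff_plus_refund[of "\<lambda>_. x" ?Q "\<lambda>y. y"] that assms
          nn_integral_refund_inverse[of b c L x]
        by (simp add: add.commute)
    qed
    also have "\<dots> = ennreal (1 - x)"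
      by (simp add: emeasure_space_1)
    also have "\<dots> \<le> ennreal (?r + v)"
      using guarantee[OF that] by (intro ennreal_leI) simp
    also have "\<dots> = ennreal ?r + ennreal v"
      using assms by (intro ennreal_plus) (auto simp: refund_nonneg)
    finally show ?thesis
      by (simp add: ennreal_add_left_cancel_le)
  qed
  show ?thesis
    unfolding optimal_y_def
  proof (intro conjI ballI Q)
    fix P assume "P \<in> strategies \<alpha>"
    then show "exp_payoff P ?Q \<le> v"
      by (rule exp_payoff_le_if_pure[OF _ Q]) (use assms(1,8) pure in auto)
  qed
qed

theorem lemma1:
  fixes \<alpha> :: real
  assumes "0 < \<alpha>" and "\<alpha> < 1"
  shows "(\<alpha> \<ge> 1 / exp 1 \<longrightarrow>
            is_value \<alpha> (- \<alpha> * ln \<alpha>)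
          \<and> optimal_x \<alpha> (- \<alpha> * ln \<alpha>)
              (atom_plus_density \<alpha> 0 (\<lambda>x. \<alpha> / (1 - x)\<^sup>2) (1 - \<alpha>))
          \<and> optimal_y \<alpha> (- \<alpha> * ln \<alpha>)
              (atom_plus_density (1 + ln \<alpha>) (1 - \<alpha>) (\<lambda>y. 1 / (1 - y)) (1 - \<alpha>)))
       \<and> (\<alpha> < 1 / exp 1 \<longrightarrow>
            is_value \<alpha> (1 / exp 1)
          \<and> optimal_x \<alpha> (1 / exp 1)
              (atom_plus_density (1 / exp 1) 0 (\<lambda>x. 1 / (exp 1 * (1 - x)\<^sup>2)) (1 - 1 / exp 1))
          \<and> optimal_y \<alpha> (1 / exp 1)
              (atom_plus_density 0 0 (\<lambda>y. 1 / (1 - y)) (1 - 1 / exp 1)))"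
proof -
  have inv_e: "0 < 1 / exp (1::real)" "1 / exp 1 < (1::real)" "ln (1 / exp 1) = (-1::real)"
    by (auto simp: ln_div)
  show ?thesis
  proof (intro conjI impI)
    assume "1 / exp 1 \<le> \<alpha>"
    then have "-1 \<le> ln \<alpha>"
      using inv_e assms(1) ln_le_cancel_iff[of "1 / exp 1" \<alpha>] by simp
    moreover have "ln \<alpha> \<le> 0"
      using assms by simp
    ultimately have "optimal_y \<alpha> (- \<alpha> * ln \<alpha>) (atom_plus_density (1 + ln \<alpha>) (1 - \<alpha>) (\<lambda>y. 1 / (1 - y)) (1 - \<alpha>))"
      using assms by (intro optimal_y_inverse) (auto simp: refund_def mult_le_0_iff algebra_simps)
    moreover have "optimal_x \<alpha> (- \<alpha> * ln \<alpha>) (atom_plus_density \<alpha> 0 (\<lambda>x. \<alpha> / (1 - x)\<^sup>2) (1 - \<alpha>))"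
      using assms by (intro optimal_x_inverse_square) auto
    ultimately show "is_value \<alpha> (- \<alpha> * ln \<alpha>)"
      and "optimal_x \<alpha> (- \<alpha> * ln \<alpha>) (atom_plus_density \<alpha> 0 (\<lambda>x. \<alpha> / (1 - x)\<^sup>2) (1 - \<alpha>))"
      and "optimal_y \<alpha> (- \<alpha> * ln \<alpha>) (atom_plus_density (1 + ln \<alpha>) (1 - \<alpha>) (\<lambda>y. 1 / (1 - y)) (1 - \<alpha>))"
      using assms(1) by (auto intro: is_value_if_optimal)
  next
    assume "\<alpha> < 1 / exp 1"
    then have oy: "optimal_y \<alpha> (1 / exp 1) (atom_plus_density 0 0 (\<lambda>y. 1 / (1 - y)) (1 - 1 / exp 1))"
      using assms inv_e less_imp_le[OF assms(2)] by (intro optimal_y_inverse) (auto simp: max_def)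
    have "optimal_x \<alpha> (- (1 / exp 1) * ln (1 / exp 1))
        (atom_plus_density (1 / exp 1) 0 (\<lambda>x. (1 / exp 1) / (1 - x)\<^sup>2) (1 - 1 / exp 1))"
      using assms \<open>\<alpha> < 1 / exp 1\<close> inv_e by (intro optimal_x_inverse_square) auto
    then have ox: "optimal_x \<alpha> (1 / exp 1) (atom_plus_density (1 / exp 1) 0 (\<lambda>x. 1 / (exp 1 * (1 - x)\<^sup>2)) (1 - 1 / exp 1))"
      using inv_e(3) by simp
    from ox oy show "is_value \<alpha> (1 / exp 1)"
      and "optimal_x \<alpha> (1 / exp 1) (atom_plus_density (1 / exp 1) 0 (\<lambda>x. 1 / (exp 1 * (1 - x)\<^sup>2)) (1 - 1 / exp 1))"
      and "optimal_y \<alpha> (1 / exp 1) (atom_plus_density 0 0 (\<lambda>y. 1 / (1 - y)) (1 - 1 / exp 1))"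
      using assms(1) by (auto intro: is_value_if_optimal)
  qed
qed

end
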